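(* Let $\mathcal J=\mathbb N\times(\mathbb N\cup\{\infty\})$ be Johnstone's dcpo, equipped with its Scott topology, and let $\mu$ be the map on the Scott-open subsets of $\mathcal J$ given by $\mu(U)=1$ if $U\neq\emptyset$ and $\mu(\emptyset)=0$. Then $\mu$ is a point-continuous valuation on $\mathcal J$ that is not a minimal valuation.
   Context: Johnstone's dcpo: $\mathcal J=\mathbb N\times(\mathbb N\cup\{\infty\})$ ($\infty$ is a new element above all natural numbers), ordered by $(a,b)\le(c,d)$ iff either ($a=c$ and $b\le d$) or ($d=\infty$ and $b\le c$). For a topological space $X$ with lattice of open sets $\mathcal O X$, a valuation is a map $\nu:\mathcal OX\to[0,\infty]$ with $\nu(\emptyset)=0$, monotone, and modular ($\nu(U)+\nu(V)=\nu(U\cup V)+\nu(U\cap V)$); it is continuous if it preserves suprema of directed families of open sets. Continuous valuations are ordered pointwise (stochastic order), forming a dcpo $\mathcal VX$ in which directed suprema are pointwise. $\delta_x$ is the Dirac valuation ($\delta_x(U)=1$ if $x\in U$, else $0$). A simple valuation is a finite sum $\sum_{i=1}^n r_i\delta_{x_i}$ with $r_i\in[0,\infty)$. The minimal valuations are the elements of the smallest subset of $\mathcal VX$ containing all simple valuations and closed under directed suprema in $\mathcal VX$. A valuation $\nu$ is point-continuous if for every open $U$ and every real $r$ with $0\le r<\nu(U)$ there is a finite subset $A\subseteq U$ such that $\nu(V)>r$ for every open $V\supseteq A$. *)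

theory Defs
  imports "HOL-Analysis.Analysis" "HOL-Library.Extended_Nat" "HOL-Library.Extended_Nonnegative_Real"
begin

definition directed_wrt :: "('a \<Rightarrow> 'a \<Rightarrow> bool) \<Rightarrow> 'a set \<Rightarrow> bool" where
  "directed_wrt le D \<longleftrightarrow> D \<noteq> {} \<and> (\<forall>x\<in>D. \<forall>y\<in>D. \<exists>z\<in>D. le x z \<and> le y z)"

definition is_lub :: "('a \<Rightarrow> 'a \<Rightarrow> bool) \<Rightarrow> 'a set \<Rightarrow> 'a \<Rightarrow> bool" where
  "is_lub le D s \<longleftrightarrow> (\<forall>x\<in>D. le x s) \<and> (\<forall>u. (\<forall>x\<in>D. le x u) \<longrightarrow> le s u)"

definition scott_open :: "('a \<Rightarrow> 'a \<Rightarrow> bool) \<Rightarrow> 'a set \<Rightarrow> bool" where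
  "scott_open le U \<longleftrightarrow>
     (\<forall>x y. x \<in> U \<and> le x y \<longrightarrow> y \<in> U) \<and>
     (\<forall>D s. directed_wrt le D \<and> is_lub le D s \<and> s \<in> U \<longrightarrow> D \<inter> U \<noteq> {})"

definition scott_topology :: "('a \<Rightarrow> 'a \<Rightarrow> bool) \<Rightarrow> 'a topology" where
  "scott_topology le = topology (scott_open le)"

definition johnstone_le :: "nat \<times> enat \<Rightarrow> nat \<times> enat \<Rightarrow> bool" where
  "johnstone_le p q \<longleftrightarrow>
     (fst p = fst q \<and> snd p \<le> snd q) \<or> (snd q = \<infinity> \<and> snd p \<le> enat (fst q))"

definition johnstone_top :: "(nat \<times> enat) topology" where
  "johnstone_top = scott_topology johnstone_le"

definition valuation :: "'a topology \<Rightarrow> ('a set \<Rightarrow> ennreal) \<Rightarrow> bool" where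
  "valuation X \<nu> \<longleftrightarrow>
     \<nu> {} = 0 \<and>
     (\<forall>U V. openin X U \<and> openin X V \<and> U \<subseteq> V \<longrightarrow> \<nu> U \<le> \<nu> V) \<and>
     (\<forall>U V. openin X U \<and> openin X V \<longrightarrow> \<nu> U + \<nu> V = \<nu> (U \<union> V) + \<nu> (U \<inter> V))"

definition continuous_valuation :: "'a topology \<Rightarrow> ('a set \<Rightarrow> ennreal) \<Rightarrow> bool" where
  "continuous_valuation X \<nu> \<longleftrightarrow> valuation X \<nu> \<and>
     (\<forall>\<U>. \<U> \<noteq> {} \<and> (\<forall>U\<in>\<U>. openin X U) \<and> (\<forall>U\<in>\<U>. \<forall>V\<in>\<U>. \<exists>W\<in>\<U>. U \<subseteq> W \<and> V \<subseteq> W)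
          \<longrightarrow> \<nu> (\<Union>\<U>) = (SUP U\<in>\<U>. \<nu> U))"

definition dirac :: "'a \<Rightarrow> 'a set \<Rightarrow> ennreal" where
  "dirac x U = (if x \<in> U then 1 else 0)"

text \<open>Valuations are compared only on open sets; we normalise them to 0 off the open sets.\<close>
definition vrestrict :: "'a topology \<Rightarrow> ('a set \<Rightarrow> ennreal) \<Rightarrow> 'a set \<Rightarrow> ennreal" where
  "vrestrict X \<nu> U = (if openin X U then \<nu> U else 0)"

inductive_set minimal_vals :: "'a topology \<Rightarrow> ('a set \<Rightarrow> ennreal) set" for X where
  simple: "(\<forall>i<n. (x :: nat \<Rightarrow> 'a) i \<in> topspace X \<and> r i \<ge> (0::real)) \<Longrightarrow>
           vrestrict X (\<lambda>U. \<Sum>i<n. ennreal (r i) * dirac (x i) U) \<in> minimal_vals X"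
| dsup: "(\<forall>\<nu>\<in>D. \<nu> \<in> minimal_vals X) \<Longrightarrow> D \<noteq> {} \<Longrightarrow>
         (\<forall>\<nu>1\<in>D. \<forall>\<nu>2\<in>D. \<exists>\<nu>3\<in>D. \<forall>U. openin X U \<longrightarrow> \<nu>1 U \<le> \<nu>3 U \<and> \<nu>2 U \<le> \<nu>3 U) \<Longrightarrow>
         vrestrict X (\<lambda>U. SUP \<nu>\<in>D. \<nu> U) \<in> minimal_vals X"

definition minimal_valuation :: "'a topology \<Rightarrow> ('a set \<Rightarrow> ennreal) \<Rightarrow> bool" where
  "minimal_valuation X \<nu> \<longleftrightarrow> vrestrict X \<nu> \<in> minimal_vals X"

definition point_continuous :: "'a topology \<Rightarrow> ('a set \<Rightarrow> ennreal) \<Rightarrow> bool" where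
  "point_continuous X \<nu> \<longleftrightarrow>
     (\<forall>U r. openin X U \<and> 0 \<le> r \<and> ennreal r < \<nu> U \<longrightarrow>
        (\<exists>A. finite A \<and> A \<subseteq> U \<and> (\<forall>V. openin X V \<and> A \<subseteq> V \<longrightarrow> \<nu> V > ennreal r)))"

end

theory Submission
  imports Defs
begin

(* The Scott-open subsets of J are the upper sets U such that (a, \<infinity>) \<in> U forces (a, enat j) \<in> U
   for some j. A nonempty one therefore contains every (m, \<infinity>) with m large, so any two nonempty
   open sets meet; this makes \<mu> modular, and \<mu> is evidently continuous and point-continuous.

   Against minimality, write V n = diag_fst_ge n = {(a, b). a \<le> b \<and> n \<le> a} and
   E k = diag_snd_ge k = {(a, b). a \<le> b \<and> k \<le> b}. Every minimal valuation \<nu> of finite total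
   mass satisfies \<nu> (V n) \<longrightarrow> 0, whereas \<mu> (V n) = 1. For simple valuations this is clear. For a
   directed supremum, modularity shows that whenever \<sigma> \<le> \<tau>, \<sigma> (V n) \<le> c and \<tau> (V n) \<ge> 2 c,
   the quantity \<tau> (E K) + \<tau> (V 0) exceeds \<sigma> (E K) + \<sigma> (V 0) by at least c, up to an error
   2 \<tau> (V K) that vanishes as K \<longrightarrow> \<infinity>. If the supremum kept every \<nu> (V n) above a fixed bound,
   directedness would let this gain be collected arbitrarily often, contradicting finiteness of
   the total mass. *)

lemma istopology_scott_open: "istopology (scott_open le)"
  unfolding istopology_def
proof (intro conjI allI impI)
  fix S T assume S: "scott_open le S" and T: "scott_open le T"
  show "scott_open le (S \<inter> T)"
    unfolding scott_open_def
  proof (intro conjI allI impI)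
    fix x y assume "x \<in> S \<inter> T \<and> le x y"
    then show "y \<in> S \<inter> T" using S T unfolding scott_open_def by blast
  next
    fix D s assume D: "directed_wrt le D \<and> is_lub le D s \<and> s \<in> S \<inter> T"
    then obtain x y where "x \<in> D \<inter> S" "y \<in> D \<inter> T"
      using S T unfolding scott_open_def by blast
    moreover from this obtain z where "z \<in> D" "le x z" "le y z"
      using D unfolding directed_wrt_def by blast
    ultimately show "D \<inter> (S \<inter> T) \<noteq> {}"
      using S T unfolding scott_open_def by blast
  qed
next
  fix K assume "\<forall>S\<in>K. scott_open le S"
  then show "scott_open le (\<Union>K)"
    unfolding scott_open_def by blast
qed

lemma openin_scott_topology: "openin (scott_topology le) U \<longleftrightarrow> scott_open le U"
  unfolding scott_topology_def topology_inverse'[OF istopology_scott_open] ..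

lemma johnstone_le_refl: "johnstone_le p p"
  unfolding johnstone_le_def by simp

lemma johnstone_le_enat_iff: "johnstone_le p (c, enat d) \<longleftrightarrow> fst p = c \<and> snd p \<le> enat d"
  unfolding johnstone_le_def by auto

lemma johnstone_leE:
  assumes "johnstone_le p q"
  obtains "fst q = fst p" "snd p \<le> snd q"
  | "snd q = \<infinity>" "snd p \<le> enat (fst q)"
  using assms unfolding johnstone_le_def by auto

lemma johnstone_le_snd_mono: "johnstone_le p q \<Longrightarrow> snd p \<le> snd q"
  by (erule johnstone_leE) simp_all

lemma johnstone_le_diag:
  assumes "johnstone_le p q" and "enat (fst p) \<le> snd p"
  shows "fst p \<le> fst q" and "enat (fst q) \<le> snd q"
  using assms unfolding johnstone_le_def by (auto dest: order_trans)

lemma johnstone_column_directed: "directed_wrt johnstone_le (range (\<lambda>j. (a, enat j)))"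
  unfolding directed_wrt_def johnstone_le_def by (auto intro: max.cobounded1 max.cobounded2)

lemma johnstone_column_lub: "is_lub johnstone_le (range (\<lambda>j. (a, enat j))) (a, \<infinity>)"
  unfolding is_lub_def
proof (intro conjI allI impI ballI)
  fix u assume ub: "\<forall>x\<in>range (\<lambda>j. (a, enat j)). johnstone_le x u"
  obtain c d where u: "u = (c, d)" by fastforce
  have "a = c"
    using ub[rule_format, of "(a, enat (Suc c))"] u by (auto simp: johnstone_le_def)
  moreover have "d = \<infinity>"
    using ub[rule_format, of "(a, enat (Suc (the_enat d)))"] u
    by (cases d) (auto simp: johnstone_le_def)
  ultimately show "johnstone_le (a, \<infinity>) u" using u by (simp add: johnstone_le_refl)
qed (auto simp: johnstone_le_def)

lemma johnstone_directed_bounded_has_max: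
  assumes D: "directed_wrt johnstone_le D" and ub: "\<forall>x\<in>D. johnstone_le x (c, enat d)"
  shows "\<exists>z\<in>D. \<forall>x\<in>D. johnstone_le x z"
proof -
  have D_column: "\<exists>e\<le>d. x = (c, enat e)" if "x \<in> D" for x
    using ub that by (cases x; cases "snd x") (auto simp: johnstone_le_enat_iff)
  obtain x0 where "x0 \<in> D" using D unfolding directed_wrt_def by blast
  then obtain e0 where "(c, enat e0) \<in> D" using D_column by blast
  moreover have "\<forall>e. (c, enat e) \<in> D \<longrightarrow> e \<le> d"
    using D_column by fastforce
  ultimately obtain e where e: "(c, enat e) \<in> D"
    and e_max: "\<forall>e'. (c, enat e') \<in> D \<longrightarrow> e' \<le> e"
    using Nat.ex_has_greatest_nat[of "\<lambda>e. (c, enat e) \<in> D"] by blast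
  have "johnstone_le x (c, enat e)" if "x \<in> D" for x
    using D_column[OF that] e_max that by (auto simp: johnstone_le_enat_iff)
  with e show ?thesis by blast
qed

lemma johnstone_below_column_bounded:
  assumes "johnstone_le x (c, \<infinity>)" and "\<not> johnstone_le (c, enat j) x"
  shows "johnstone_le x (Suc (c + j), \<infinity>)"
  using assms unfolding johnstone_le_def by (cases "snd x") auto

lemma openin_johnstone_top_iff:
  "openin johnstone_top U \<longleftrightarrow>
     (\<forall>p q. p \<in> U \<longrightarrow> johnstone_le p q \<longrightarrow> q \<in> U) \<and>
     (\<forall>a. (a, \<infinity>) \<in> U \<longrightarrow> (\<exists>j. (a, enat j) \<in> U))"
  (is "_ \<longleftrightarrow> ?upper \<and> ?column")
proof
  assume "openin johnstone_top U"
  then show "?upper \<and> ?column"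
    using johnstone_column_directed johnstone_column_lub
    unfolding johnstone_top_def openin_scott_topology scott_open_def by blast
next
  assume U: "?upper \<and> ?column"
  show "openin johnstone_top U"
    unfolding johnstone_top_def openin_scott_topology scott_open_def
  proof (intro conjI allI impI)
    fix D s assume D: "directed_wrt johnstone_le D \<and> is_lub johnstone_le D s \<and> s \<in> U"
    then have ub: "\<forall>x\<in>D. johnstone_le x s"
      and least: "\<And>u. \<forall>x\<in>D. johnstone_le x u \<Longrightarrow> johnstone_le s u"
      unfolding is_lub_def by blast+
    obtain c d where s: "s = (c, d)" by fastforce
    show "D \<inter> U \<noteq> {}"
    proof (cases d)
      case (enat d')
      then obtain z where "z \<in> D" "\<forall>x\<in>D. johnstone_le x z"
        using johnstone_directed_bounded_has_max D ub s by blast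
      then show ?thesis using least U D by blast
    next
      case infinity
      then obtain j where j: "(c, enat j) \<in> U" using U D s by blast
      show ?thesis
      proof
        assume "D \<inter> U = {}"
        then have "\<forall>x\<in>D. \<not> johnstone_le (c, enat j) x" using U j by blast
        then have "johnstone_le s (Suc (c + j), \<infinity>)"
          using least johnstone_below_column_bounded ub s infinity by blast
        then show False using s infinity by (simp add: johnstone_le_def)
      qed
    qed
  qed (use U in blast)
qed

lemma openin_johnstone_topI:
  assumes "\<And>p q. p \<in> U \<Longrightarrow> johnstone_le p q \<Longrightarrow> q \<in> U"
    and "\<And>a. (a, \<infinity>) \<in> U \<Longrightarrow> \<exists>j. (a, enat j) \<in> U"
  shows "openin johnstone_top U"
  using assms unfolding openin_johnstone_top_iff by blast

lemma openin_johnstone_top_upclosed: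
  "openin johnstone_top U \<Longrightarrow> p \<in> U \<Longrightarrow> johnstone_le p q \<Longrightarrow> q \<in> U"
  unfolding openin_johnstone_top_iff by blast

lemma openin_johnstone_top_UNIV: "openin johnstone_top UNIV"
  by (simp add: openin_johnstone_top_iff)

lemma johnstone_open_contains_tail:
  assumes "openin johnstone_top U" and "U \<noteq> {}"
  shows "\<exists>N. \<forall>m\<ge>N. (m, \<infinity>) \<in> U"
proof -
  obtain a b where "(a, b) \<in> U" using assms(2) by fastforce
  moreover have "johnstone_le (a, b) (a, \<infinity>)" by (simp add: johnstone_le_def)
  ultimately obtain j where j: "(a, enat j) \<in> U"
    using assms(1) unfolding openin_johnstone_top_iff by blast
  have "johnstone_le (a, enat j) (m, \<infinity>)" if "j \<le> m" for m
    using that by (simp add: johnstone_le_def)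
  then show ?thesis using assms(1) j unfolding openin_johnstone_top_iff by blast
qed

lemma johnstone_open_Int_nonempty:
  assumes "openin johnstone_top U" "U \<noteq> {}" "openin johnstone_top V" "V \<noteq> {}"
  shows "U \<inter> V \<noteq> {}"
proof -
  obtain M N where "\<forall>m\<ge>M. (m, \<infinity>) \<in> U" "\<forall>m\<ge>N. (m, \<infinity>) \<in> V"
    using johnstone_open_contains_tail assms by meson
  then have "(max M N, \<infinity>) \<in> U \<inter> V" by simp
  then show ?thesis by blast
qed

lemma valuation_mono:
  "valuation X \<nu> \<Longrightarrow> openin X U \<Longrightarrow> openin X V \<Longrightarrow> U \<subseteq> V \<Longrightarrow> \<nu> U \<le> \<nu> V"
  unfolding valuation_def by blast

lemma valuation_modular:
  "valuation X \<nu> \<Longrightarrow> openin X U \<Longrightarrow> openin X V \<Longrightarrow> \<nu> U + \<nu> V = \<nu> (U \<union> V) + \<nu> (U \<inter> V)"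
  unfolding valuation_def by blast

lemma valuation_subadditive:
  assumes "valuation X \<nu>" "openin X U" "openin X V"
  shows "\<nu> (U \<union> V) \<le> \<nu> U + \<nu> V"
proof -
  have "\<nu> (U \<union> V) \<le> \<nu> (U \<union> V) + \<nu> (U \<inter> V)" by simp
  also have "\<dots> = \<nu> U + \<nu> V" using valuation_modular[OF assms] by simp
  finally show ?thesis .
qed

lemma valuation_vrestrict_iff: "valuation X (vrestrict X \<nu>) \<longleftrightarrow> valuation X \<nu>"
  unfolding valuation_def vrestrict_def by (simp add: openin_Un openin_Int)

lemma valuation_dirac: "valuation X (dirac x)"
  unfolding valuation_def dirac_def by auto

lemma valuation_cmult: "valuation X \<nu> \<Longrightarrow> valuation X (\<lambda>U. c * \<nu> U)"
  unfolding valuation_def by (simp add: mult_left_mono distrib_left[symmetric])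

lemma valuation_sum:
  assumes "\<And>i. i \<in> I \<Longrightarrow> valuation X (\<nu> i)"
  shows "valuation X (\<lambda>U. \<Sum>i\<in>I. \<nu> i U)"
  using assms unfolding valuation_def by (simp add: sum_mono sum.distrib[symmetric])

lemma valuation_SUP_directed:
  assumes val: "\<And>\<sigma>. \<sigma> \<in> D \<Longrightarrow> valuation X \<sigma>" and "D \<noteq> {}"
    and dir: "\<forall>\<sigma>1\<in>D. \<forall>\<sigma>2\<in>D. \<exists>\<sigma>3\<in>D. \<forall>U. openin X U \<longrightarrow> \<sigma>1 U \<le> \<sigma>3 U \<and> \<sigma>2 U \<le> \<sigma>3 U"
  shows "valuation X (\<lambda>U. SUP \<sigma>\<in>D. \<sigma> U)"
  unfolding valuation_def
proof (intro conjI allI impI)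
  have "\<sigma> {} = 0" if "\<sigma> \<in> D" for \<sigma>
    using val[OF that] by (simp add: valuation_def)
  then show "(SUP \<sigma>\<in>D. \<sigma> {}) = 0" using \<open>D \<noteq> {}\<close> by (simp add: SUP_eq_const)
next
  fix U V assume "openin X U \<and> openin X V \<and> U \<subseteq> V"
  then show "(SUP \<sigma>\<in>D. \<sigma> U) \<le> (SUP \<sigma>\<in>D. \<sigma> V)"
    using val valuation_mono by (intro SUP_mono) blast
next
  fix U V assume UV: "openin X U \<and> openin X V"
  have SUP_add: "(SUP \<sigma>\<in>D. \<sigma> A + \<sigma> B) = (SUP \<sigma>\<in>D. \<sigma> A) + (SUP \<sigma>\<in>D. \<sigma> B)"
    if "openin X A" "openin X B" for A B
    using dir that by (intro SUP_add_directed_ennreal) (meson add_mono)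
  have "(SUP \<sigma>\<in>D. \<sigma> U) + (SUP \<sigma>\<in>D. \<sigma> V) = (SUP \<sigma>\<in>D. \<sigma> U + \<sigma> V)"
    using SUP_add UV by simp
  also have "\<dots> = (SUP \<sigma>\<in>D. \<sigma> (U \<union> V) + \<sigma> (U \<inter> V))"
    using val valuation_modular UV by (intro SUP_cong refl) blast
  also have "\<dots> = (SUP \<sigma>\<in>D. \<sigma> (U \<union> V)) + (SUP \<sigma>\<in>D. \<sigma> (U \<inter> V))"
    using SUP_add UV by blast
  finally show "(SUP \<sigma>\<in>D. \<sigma> U) + (SUP \<sigma>\<in>D. \<sigma> V)
      = (SUP \<sigma>\<in>D. \<sigma> (U \<union> V)) + (SUP \<sigma>\<in>D. \<sigma> (U \<inter> V))" .
qed

lemma minimal_vals_valuation: "\<nu> \<in> minimal_vals X \<Longrightarrow> valuation X \<nu>"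
proof (induction rule: minimal_vals.induct)
  case (simple n x r)
  then show ?case
    by (simp add: valuation_vrestrict_iff valuation_sum valuation_cmult valuation_dirac)
next
  case (dsup D)
  then show ?case
    by (simp add: valuation_vrestrict_iff valuation_SUP_directed)
qed

lemma valuation_exchange_inequality:
  assumes \<sigma>: "valuation X \<sigma>" and \<tau>: "valuation X \<tau>" and le: "\<And>U. openin X U \<Longrightarrow> \<sigma> U \<le> \<tau> U"
    and opens: "openin X E" "openin X G" "openin X B" "openin X V" "openin X W" "openin X V0"
    and E_cover: "E \<subseteq> G \<union> (E \<inter> V)"
    and B_Un: "B \<union> V = V0" and B_Int: "B \<inter> V = E \<inter> V"
    and G_Un: "G \<union> (E \<inter> V) \<subseteq> E \<union> W" and G_Int: "G \<inter> (E \<inter> V) \<subseteq> W"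
  shows "\<sigma> E + \<sigma> V0 + \<tau> V \<le> \<tau> E + 2 * \<tau> W + \<tau> V0 + \<sigma> V"
proof -
  have EV: "openin X (E \<inter> V)" using opens by blast
  have B_eq: "\<nu> B + \<nu> V = \<nu> V0 + \<nu> (E \<inter> V)" if "valuation X \<nu>" for \<nu>
    using valuation_modular[OF that opens(3,4)] B_Un B_Int by simp
  have \<sigma>_cover: "\<sigma> E \<le> \<sigma> G + \<sigma> (E \<inter> V)"
    using valuation_mono[OF \<sigma> opens(1) openin_Un[OF opens(2) EV] E_cover]
      valuation_subadditive[OF \<sigma> opens(2) EV] by (rule order_trans)
  have \<tau>_cover: "\<tau> G + \<tau> (E \<inter> V) \<le> \<tau> E + 2 * \<tau> W"
  proof -
    have "\<tau> G + \<tau> (E \<inter> V) = \<tau> (G \<union> (E \<inter> V)) + \<tau> (G \<inter> (E \<inter> V))"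
      using valuation_modular[OF \<tau> opens(2) EV] .
    also have "\<dots> \<le> \<tau> (E \<union> W) + \<tau> W"
      using valuation_mono[OF \<tau>] opens EV G_Un G_Int by (intro add_mono) blast+
    also have "\<dots> \<le> (\<tau> E + \<tau> W) + \<tau> W"
      using valuation_subadditive[OF \<tau> opens(1,5)] by (rule add_right_mono)
    finally show ?thesis by (simp add: mult_2 add.assoc)
  qed
  have "\<sigma> E + \<sigma> V0 + \<tau> V \<le> (\<sigma> G + \<sigma> (E \<inter> V)) + \<sigma> V0 + \<tau> V"
    using \<sigma>_cover by (intro add_right_mono)
  also have "\<dots> = \<sigma> G + (\<sigma> V0 + \<sigma> (E \<inter> V)) + \<tau> V"
    by (simp add: ac_simps)
  also have "\<dots> = \<sigma> G + (\<sigma> B + \<sigma> V) + \<tau> V"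
    by (simp only: B_eq[OF \<sigma>])
  also have "\<dots> \<le> \<tau> G + (\<tau> B + \<sigma> V) + \<tau> V"
    using le opens by (intro add_mono order_refl)
  also have "\<dots> = \<tau> G + (\<tau> B + \<tau> V) + \<sigma> V"
    by (simp add: ac_simps)
  also have "\<dots> = (\<tau> G + \<tau> (E \<inter> V)) + \<tau> V0 + \<sigma> V"
    by (simp only: B_eq[OF \<tau>]) (simp add: ac_simps)
  also have "\<dots> \<le> (\<tau> E + 2 * \<tau> W) + \<tau> V0 + \<sigma> V"
    using \<tau>_cover by (intro add_right_mono)
  finally show ?thesis .
qed

lemma continuous_valuation_nonempty_indicator:
  assumes irreducible: "\<And>U V. openin X U \<Longrightarrow> openin X V \<Longrightarrow> U \<noteq> {} \<Longrightarrow> V \<noteq> {} \<Longrightarrow> U \<inter> V \<noteq> {}"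
  shows "continuous_valuation X (\<lambda>U. if U = {} then 0 else 1)"
  unfolding continuous_valuation_def valuation_def
proof (intro conjI allI impI)
  fix U V assume "openin X U \<and> openin X V"
  then show "(if U = {} then 0 else 1) + (if V = {} then 0 else 1)
    = (if U \<union> V = {} then 0 else 1) + (if U \<inter> V = {} then 0 else (1::ennreal))"
    using irreducible[of U V] by auto
next
  fix \<U> :: "'a set set"
  assume "\<U> \<noteq> {} \<and> (\<forall>U\<in>\<U>. openin X U) \<and> (\<forall>U\<in>\<U>. \<forall>V\<in>\<U>. \<exists>W\<in>\<U>. U \<subseteq> W \<and> V \<subseteq> W)"
  then have "\<U> \<noteq> {}" by blast
  show "(if \<Union>\<U> = {} then 0 else 1) = (SUP U\<in>\<U>. if U = {} then 0 else (1::ennreal))"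
  proof (cases "\<Union>\<U> = {}")
    case True
    then show ?thesis using \<open>\<U> \<noteq> {}\<close> by (simp add: SUP_eq_const)
  next
    case False
    then obtain U0 where "U0 \<in> \<U>" "U0 \<noteq> {}" by blast
    have "(SUP U\<in>\<U>. if U = {} then 0 else (1::ennreal)) \<le> 1"
      by (rule SUP_least) simp
    moreover have "1 \<le> (SUP U\<in>\<U>. if U = {} then 0 else (1::ennreal))"
      using SUP_upper[OF \<open>U0 \<in> \<U>\<close>, of "\<lambda>U. if U = {} then 0 else (1::ennreal)"] \<open>U0 \<noteq> {}\<close>
      by simp
    ultimately have "(SUP U\<in>\<U>. if U = {} then 0 else (1::ennreal)) = 1" by (rule antisym)
    with False show ?thesis by simp
  qed
qed auto

lemma point_continuous_nonempty_indicator: "point_continuous X (\<lambda>U. if U = {} then 0 else 1)"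
  unfolding point_continuous_def
proof (intro allI impI)
  fix U r assume "openin X U \<and> 0 \<le> r \<and> ennreal r < (if U = {} then 0 else 1)"
  then obtain x where "x \<in> U" and "ennreal r < 1" by (auto split: if_splits)
  then show "\<exists>A. finite A \<and> A \<subseteq> U \<and>
      (\<forall>V. openin X V \<and> A \<subseteq> V \<longrightarrow> ennreal r < (if V = {} then 0 else 1))"
    by (intro exI[of _ "{x}"]) auto
qed

definition diag_fst_ge :: "nat \<Rightarrow> (nat \<times> enat) set" where
  "diag_fst_ge n = {p. enat (fst p) \<le> snd p \<and> n \<le> fst p}"

definition diag_snd_ge :: "nat \<Rightarrow> (nat \<times> enat) set" where
  "diag_snd_ge k = {p. enat (fst p) \<le> snd p \<and> enat k \<le> snd p}"

lemma openin_diag_fst_ge: "openin johnstone_top (diag_fst_ge n)"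
proof (rule openin_johnstone_topI)
  fix p q assume "p \<in> diag_fst_ge n" "johnstone_le p q"
  then show "q \<in> diag_fst_ge n"
    using johnstone_le_diag[of p q] unfolding diag_fst_ge_def by auto
qed (auto simp: diag_fst_ge_def)

lemma openin_diag_snd_ge: "openin johnstone_top (diag_snd_ge k)"
proof (rule openin_johnstone_topI)
  fix p q assume "p \<in> diag_snd_ge k" "johnstone_le p q"
  then show "q \<in> diag_snd_ge k"
    using johnstone_le_diag[of p q] johnstone_le_snd_mono[of p q] order_trans
    unfolding diag_snd_ge_def by blast
next
  fix a
  have "(a, enat (a + k)) \<in> diag_snd_ge k" by (simp add: diag_snd_ge_def)
  then show "\<exists>j. (a, enat j) \<in> diag_snd_ge k" ..
qed

lemma diag_fst_ge_antimono: "m \<le> n \<Longrightarrow> diag_fst_ge n \<subseteq> diag_fst_ge m"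
  unfolding diag_fst_ge_def by auto

lemma openin_low_columns_Un_diag_fst_ge:
  "openin johnstone_top ({p. fst p < n \<and> enat k \<le> snd p} \<union> diag_fst_ge k)"
  (is "openin _ ?G")
proof (rule openin_johnstone_topI)
  fix p q assume p: "p \<in> ?G" and pq: "johnstone_le p q"
  show "q \<in> ?G"
  proof (cases "p \<in> diag_fst_ge k")
    case True
    then show ?thesis using openin_johnstone_top_upclosed[OF openin_diag_fst_ge _ pq] by simp
  next
    case False
    with p have "fst p < n" "enat k \<le> snd p" by auto
    with pq show ?thesis
    proof (cases rule: johnstone_leE)
      case 2
      then have "enat k \<le> enat (fst q)" using \<open>enat k \<le> snd p\<close> order_trans by blast
      with 2 show ?thesis by (simp add: diag_fst_ge_def)
    qed auto
  qed
qed (auto simp: diag_fst_ge_def)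

lemma openin_diag_snd_ge_Un_low_columns:
  "openin johnstone_top (diag_snd_ge k \<union> {p \<in> diag_fst_ge 0. fst p < n})"
  (is "openin _ ?B")
proof (rule openin_johnstone_topI)
  fix p q assume p: "p \<in> ?B" and pq: "johnstone_le p q"
  show "q \<in> ?B"
  proof (cases "p \<in> diag_snd_ge k")
    case True
    then show ?thesis using openin_johnstone_top_upclosed[OF openin_diag_snd_ge _ pq] by simp
  next
    case False
    with p have "fst p < n" "p \<in> diag_fst_ge 0" by auto
    then have "q \<in> diag_fst_ge 0"
      using openin_johnstone_top_upclosed[OF openin_diag_fst_ge _ pq] by blast
    with pq \<open>fst p < n\<close> show ?thesis
      by (cases rule: johnstone_leE) (auto simp: diag_fst_ge_def diag_snd_ge_def)
  qed
next
  fix a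
  have "(a, enat (a + k)) \<in> ?B" by (simp add: diag_snd_ge_def)
  then show "\<exists>j. (a, enat j) \<in> ?B" ..
qed

lemma johnstone_exchange_inequality:
  assumes \<sigma>: "valuation johnstone_top \<sigma>" and \<tau>: "valuation johnstone_top \<tau>"
    and le: "\<And>U. openin johnstone_top U \<Longrightarrow> \<sigma> U \<le> \<tau> U" and "n \<le> k"
  shows "\<sigma> (diag_snd_ge k) + \<sigma> (diag_fst_ge 0) + \<tau> (diag_fst_ge n)
    \<le> \<tau> (diag_snd_ge k) + 2 * \<tau> (diag_fst_ge k) + \<tau> (diag_fst_ge 0) + \<sigma> (diag_fst_ge n)"
proof (rule valuation_exchange_inequality[OF \<sigma> \<tau> le])
  let ?G = "{p. fst p < n \<and> enat k \<le> snd p} \<union> diag_fst_ge k"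
  let ?B = "diag_snd_ge k \<union> {p \<in> diag_fst_ge 0. fst p < n}"
  show "openin johnstone_top ?G" "openin johnstone_top ?B"
    by (rule openin_low_columns_Un_diag_fst_ge openin_diag_snd_ge_Un_low_columns)+
  show "diag_snd_ge k \<subseteq> ?G \<union> (diag_snd_ge k \<inter> diag_fst_ge n)"
    by (auto simp: diag_snd_ge_def diag_fst_ge_def)
  show "?B \<union> diag_fst_ge n = diag_fst_ge 0"
    by (auto simp: diag_snd_ge_def diag_fst_ge_def)
  show "?B \<inter> diag_fst_ge n = diag_snd_ge k \<inter> diag_fst_ge n"
    by (auto simp: diag_snd_ge_def diag_fst_ge_def)
  show "?G \<union> (diag_snd_ge k \<inter> diag_fst_ge n) \<subseteq> diag_snd_ge k \<union> diag_fst_ge k"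
    using \<open>n \<le> k\<close>
    by (auto simp: diag_snd_ge_def diag_fst_ge_def intro: order_trans[of _ "enat k"])
  show "?G \<inter> (diag_snd_ge k \<inter> diag_fst_ge n) \<subseteq> diag_fst_ge k"
    by (auto simp: diag_snd_ge_def diag_fst_ge_def)
qed (simp_all add: openin_diag_fst_ge openin_diag_snd_ge)

lemma johnstone_potential_step:
  assumes \<sigma>: "valuation johnstone_top \<sigma>" and \<tau>: "valuation johnstone_top \<tau>"
    and le: "\<And>U. openin johnstone_top U \<Longrightarrow> \<sigma> U \<le> \<tau> U" and "n \<le> K"
    and \<sigma>_small: "\<sigma> (diag_fst_ge n) \<le> c" and \<tau>_large: "2 * c \<le> \<tau> (diag_fst_ge n)" and "c \<noteq> top"
    and \<sigma>_potential: "of_nat T * c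
      \<le> \<sigma> (diag_snd_ge K) + \<sigma> (diag_fst_ge 0) + of_nat (2 * T) * \<sigma> (diag_fst_ge K)"
  shows "of_nat (Suc T) * c
    \<le> \<tau> (diag_snd_ge K) + \<tau> (diag_fst_ge 0) + of_nat (2 * Suc T) * \<tau> (diag_fst_ge K)"
proof -
  let ?E = "diag_snd_ge K" and ?V0 = "diag_fst_ge 0"
    and ?Vn = "diag_fst_ge n" and ?VK = "diag_fst_ge K"
  have VK: "of_nat (2 * T) * \<sigma> ?VK \<le> of_nat (2 * T) * \<tau> ?VK"
    by (intro mult_left_mono le openin_diag_fst_ge) simp
  have "c + of_nat (Suc T) * c = of_nat T * c + 2 * c"
    by (simp only: of_nat_Suc distrib_right distrib_left mult_2 mult_2_right mult_1 mult_1_right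
        ac_simps)
  also have "\<dots> \<le> (\<sigma> ?E + \<sigma> ?V0 + of_nat (2 * T) * \<sigma> ?VK) + \<tau> ?Vn"
    using \<sigma>_potential \<tau>_large by (rule add_mono)
  also have "\<dots> \<le> (\<sigma> ?E + \<sigma> ?V0 + \<tau> ?Vn) + of_nat (2 * T) * \<tau> ?VK"
    using VK by (simp add: ac_simps add_left_mono)
  also have "\<dots> \<le> (\<tau> ?E + 2 * \<tau> ?VK + \<tau> ?V0 + \<sigma> ?Vn) + of_nat (2 * T) * \<tau> ?VK"
    using johnstone_exchange_inequality[OF \<sigma> \<tau> le \<open>n \<le> K\<close>] by (rule add_right_mono)
  also have "\<dots> \<le> (\<tau> ?E + 2 * \<tau> ?VK + \<tau> ?V0 + c) + of_nat (2 * T) * \<tau> ?VK"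
    using \<sigma>_small by (intro add_mono order_refl)
  also have "\<dots> = c + (\<tau> ?E + \<tau> ?V0 + of_nat (2 * Suc T) * \<tau> ?VK)"
    by (simp only: of_nat_mult of_nat_Suc of_nat_numeral distrib_left distrib_right
        mult_1 mult_1_right ac_simps)
  finally show ?thesis
    using \<open>c \<noteq> top\<close> by (simp add: ennreal_add_left_cancel_le)
qed

lemma johnstone_potential_unbounded:
  assumes val: "\<And>\<sigma>. \<sigma> \<in> D \<Longrightarrow> valuation johnstone_top \<sigma>"
    and tail: "\<And>\<sigma>. \<sigma> \<in> D \<Longrightarrow> (\<lambda>n. \<sigma> (diag_fst_ge n)) \<longlonglongrightarrow> 0"
    and "D \<noteq> {}"
    and dir: "\<forall>\<sigma>1\<in>D. \<forall>\<sigma>2\<in>D. \<exists>\<sigma>3\<in>D. \<forall>U. openin johnstone_top U \<longrightarrow> \<sigma>1 U \<le> \<sigma>3 U \<and> \<sigma>2 U \<le> \<sigma>3 U"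
    and "0 < c" "c \<noteq> top"
    and large: "\<And>n. \<exists>\<sigma>\<in>D. 2 * c \<le> \<sigma> (diag_fst_ge n)"
  shows "\<exists>\<tau>\<in>D. \<forall>\<^sub>F K in sequentially. of_nat T * c
    \<le> \<tau> (diag_snd_ge K) + \<tau> (diag_fst_ge 0) + of_nat (2 * T) * \<tau> (diag_fst_ge K)"
proof (induction T)
  case 0
  then show ?case using \<open>D \<noteq> {}\<close> by auto
next
  case (Suc T)
  then obtain \<tau> N where \<tau>: "\<tau> \<in> D" and potential: "\<forall>K\<ge>N. of_nat T * c
      \<le> \<tau> (diag_snd_ge K) + \<tau> (diag_fst_ge 0) + of_nat (2 * T) * \<tau> (diag_fst_ge K)"
    by (auto simp: eventually_sequentially)
  obtain n where \<tau>_small: "\<tau> (diag_fst_ge n) < c"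
    using order_tendstoD(2)[OF tail[OF \<tau>] \<open>0 < c\<close>] by (auto simp: eventually_sequentially)
  obtain \<sigma> where "\<sigma> \<in> D" and \<sigma>_large: "2 * c \<le> \<sigma> (diag_fst_ge n)"
    using large by blast
  then obtain \<tau>' where \<tau>': "\<tau>' \<in> D"
    and above: "\<And>U. openin johnstone_top U \<Longrightarrow> \<tau> U \<le> \<tau>' U \<and> \<sigma> U \<le> \<tau>' U"
    using dir \<tau> by blast
  have "of_nat (Suc T) * c \<le> \<tau>' (diag_snd_ge K) + \<tau>' (diag_fst_ge 0)
      + of_nat (2 * Suc T) * \<tau>' (diag_fst_ge K)" if "max n N \<le> K" for K
  proof (rule johnstone_potential_step[OF val[OF \<tau>] val[OF \<tau>']])
    show "2 * c \<le> \<tau>' (diag_fst_ge n)"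
      using \<sigma>_large above[OF openin_diag_fst_ge] order_trans by blast
  qed (use above that \<tau>_small potential \<open>c \<noteq> top\<close> in auto)
  then show ?case
    using \<tau>' unfolding eventually_sequentially by blast
qed

lemma decseq_ennreal_not_tendsto_0E:
  fixes f :: "nat \<Rightarrow> ennreal"
  assumes "decseq f" and "\<not> f \<longlonglongrightarrow> 0"
  obtains l where "0 < l" and "\<And>n. ennreal l \<le> f n"
proof -
  have "0 < (INF n. f n)"
    using LIMSEQ_INF[OF \<open>decseq f\<close>] \<open>\<not> f \<longlonglongrightarrow> 0\<close> by (metis not_gr_zero)
  then obtain y where "0 < y" and y: "y < (INF n. f n)"
    using dense by blast
  then obtain l where "y = ennreal l" "0 \<le> l"
    using less_top_ennreal order.strict_trans2[OF y top_greatest] by blast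
  moreover have "y \<le> f n" for n
    using y INF_lower[of n UNIV f] by simp
  ultimately show thesis
    using that[of l] \<open>0 < y\<close> by simp
qed

lemma johnstone_potential_bounded:
  assumes \<tau>: "valuation johnstone_top \<tau>" and tail: "(\<lambda>n. \<tau> (diag_fst_ge n)) \<longlonglongrightarrow> 0"
    and bounded: "\<And>U. openin johnstone_top U \<Longrightarrow> \<tau> U \<le> M"
  shows "\<forall>\<^sub>F K in sequentially.
    \<tau> (diag_snd_ge K) + \<tau> (diag_fst_ge 0) + of_nat (2 * T) * \<tau> (diag_fst_ge K) \<le> 2 * M + 1"
proof -
  have "\<forall>\<^sub>F K in sequentially. of_nat (2 * T) * \<tau> (diag_fst_ge K) < 1"
    using ennreal_tendsto_cmult[OF of_nat_less_top tail, of "2 * T"]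
    by (rule order_tendstoD(2)) simp
  then show ?thesis
  proof (rule eventually_mono)
    fix K assume "of_nat (2 * T) * \<tau> (diag_fst_ge K) < 1"
    then show "\<tau> (diag_snd_ge K) + \<tau> (diag_fst_ge 0) + of_nat (2 * T) * \<tau> (diag_fst_ge K)
      \<le> 2 * M + 1"
      using bounded[OF openin_diag_snd_ge] bounded[OF openin_diag_fst_ge]
      by (simp add: mult_2 add_mono less_imp_le)
  qed
qed

lemma johnstone_tail_directed_SUP:
  assumes val: "\<And>\<sigma>. \<sigma> \<in> D \<Longrightarrow> valuation johnstone_top \<sigma>"
    and tail: "\<And>\<sigma>. \<sigma> \<in> D \<Longrightarrow> (\<lambda>n. \<sigma> (diag_fst_ge n)) \<longlonglongrightarrow> 0"
    and "D \<noteq> {}"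
    and dir: "\<forall>\<sigma>1\<in>D. \<forall>\<sigma>2\<in>D. \<exists>\<sigma>3\<in>D. \<forall>U. openin johnstone_top U \<longrightarrow> \<sigma>1 U \<le> \<sigma>3 U \<and> \<sigma>2 U \<le> \<sigma>3 U"
    and finite: "(SUP \<sigma>\<in>D. \<sigma> UNIV) < top"
  shows "(\<lambda>n. SUP \<sigma>\<in>D. \<sigma> (diag_fst_ge n)) \<longlonglongrightarrow> 0"
proof (rule ccontr)
  define f where "f n = (SUP \<sigma>\<in>D. \<sigma> (diag_fst_ge n))" for n
  define M where "M = (SUP \<sigma>\<in>D. \<sigma> UNIV)"
  assume "\<not> f \<longlonglongrightarrow> 0"
  moreover have "decseq f"
    unfolding decseq_def f_def
  proof (intro allI impI SUP_mono)
    fix m n :: nat and \<sigma> assume "m \<le> n" "\<sigma> \<in> D"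
    then show "\<exists>\<sigma>'\<in>D. \<sigma> (diag_fst_ge n) \<le> \<sigma>' (diag_fst_ge m)"
      using valuation_mono[OF val openin_diag_fst_ge openin_diag_fst_ge diag_fst_ge_antimono] by blast
  qed
  ultimately obtain l where "0 < l" and l: "\<And>n. ennreal l \<le> f n"
    using decseq_ennreal_not_tendsto_0E by blast
  define c where "c = ennreal (l / 4)"
  have "0 < c" "c \<noteq> top" using \<open>0 < l\<close> by (simp_all add: c_def)
  have large: "\<exists>\<sigma>\<in>D. 2 * c \<le> \<sigma> (diag_fst_ge n)" for n
  proof -
    have "2 * c = ennreal (2 * (l / 4))"
      unfolding c_def by (subst ennreal_mult') simp_all
    also have "\<dots> < ennreal l" using \<open>0 < l\<close> by (simp add: ennreal_lessI)
    also have "\<dots> \<le> f n" by (rule l)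
    finally show ?thesis unfolding f_def less_SUP_iff by (blast intro: less_imp_le)
  qed
  have "(SUP T. of_nat T * c) = top"
    using \<open>0 < c\<close> by (simp flip: SUP_mult_right_ennreal add: ennreal_SUP_of_nat_eq_top)
  moreover have "2 * M + 1 < top"
    using finite unfolding M_def by (simp add: ennreal_mult_less_top)
  ultimately obtain T where T: "2 * M + 1 < of_nat T * c"
    by (metis less_SUP_iff)
  obtain \<tau> where \<tau>: "\<tau> \<in> D" and lower: "\<forall>\<^sub>F K in sequentially. of_nat T * c
      \<le> \<tau> (diag_snd_ge K) + \<tau> (diag_fst_ge 0) + of_nat (2 * T) * \<tau> (diag_fst_ge K)"
    using johnstone_potential_unbounded[OF val tail \<open>D \<noteq> {}\<close> dir \<open>0 < c\<close> \<open>c \<noteq> top\<close> large] by blast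
  have "\<tau> U \<le> M" if "openin johnstone_top U" for U
    using valuation_mono[OF val[OF \<tau>] that openin_johnstone_top_UNIV subset_UNIV]
      SUP_upper[OF \<tau>, of "\<lambda>\<sigma>. \<sigma> UNIV"] unfolding M_def by (rule order_trans)
  then have upper: "\<forall>\<^sub>F K in sequentially.
      \<tau> (diag_snd_ge K) + \<tau> (diag_fst_ge 0) + of_nat (2 * T) * \<tau> (diag_fst_ge K) \<le> 2 * M + 1"
    using johnstone_potential_bounded[OF val[OF \<tau>] tail[OF \<tau>]] by blast
  have "\<forall>\<^sub>F K in sequentially. of_nat T * c \<le> 2 * M + 1"
    using lower upper by eventually_elim (rule order_trans)
  with T show False
    by (simp add: not_le[symmetric])
qed

lemma johnstone_simple_tail:
  fixes n :: nat and x :: "nat \<Rightarrow> nat \<times> enat"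
  shows "(\<lambda>N. \<Sum>i<n. ennreal (r i) * dirac (x i) (diag_fst_ge N)) \<longlonglongrightarrow> 0"
proof (rule tendsto_eventually)
  have "finite ((\<lambda>i. fst (x i)) ` {..<n})" by simp
  then obtain M where M: "\<forall>i<n. fst (x i) < M"
    unfolding finite_nat_set_iff_bounded by auto
  have "(\<Sum>i<n. ennreal (r i) * dirac (x i) (diag_fst_ge N)) = 0" if "M \<le> N" for N
    using M that by (intro sum.neutral) (auto simp: dirac_def diag_fst_ge_def)
  then show "\<forall>\<^sub>F N in sequentially. (\<Sum>i<n. ennreal (r i) * dirac (x i) (diag_fst_ge N)) = 0"
    unfolding eventually_sequentially by blast
qed

lemma minimal_vals_johnstone_tail:
  assumes "\<nu> \<in> minimal_vals johnstone_top" and "\<nu> UNIV < top"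
  shows "(\<lambda>n. \<nu> (diag_fst_ge n)) \<longlonglongrightarrow> 0"
  using assms
proof (induction rule: minimal_vals.induct)
  case (simple n x r)
  then show ?case
    by (simp add: vrestrict_def openin_diag_fst_ge johnstone_simple_tail)
next
  case (dsup D)
  then have finite: "(SUP \<sigma>\<in>D. \<sigma> UNIV) < top"
    by (simp add: vrestrict_def openin_johnstone_top_UNIV)
  have "(\<lambda>n. SUP \<sigma>\<in>D. \<sigma> (diag_fst_ge n)) \<longlonglongrightarrow> 0"
  proof (rule johnstone_tail_directed_SUP)
    fix \<sigma> assume "\<sigma> \<in> D"
    then show "valuation johnstone_top \<sigma>"
      using dsup.IH minimal_vals_valuation by blast
    have "\<sigma> UNIV < top"
      using SUP_upper[OF \<open>\<sigma> \<in> D\<close>, of "\<lambda>\<sigma>. \<sigma> UNIV"] finite by (rule le_less_trans)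
    then show "(\<lambda>n. \<sigma> (diag_fst_ge n)) \<longlonglongrightarrow> 0"
      using dsup.IH \<open>\<sigma> \<in> D\<close> by blast
  qed (use dsup finite in auto)
  then show ?case
    by (simp add: vrestrict_def openin_diag_fst_ge)
qed

lemma not_minimal_valuation_johnstone_nonempty_indicator:
  "\<not> minimal_valuation johnstone_top (\<lambda>U. if U = {} then 0 else 1)"
proof
  let ?\<mu> = "vrestrict johnstone_top (\<lambda>U. if U = {} then 0 else 1)"
  assume "minimal_valuation johnstone_top (\<lambda>U. if U = {} then 0 else 1)"
  then have "?\<mu> \<in> minimal_vals johnstone_top" by (simp add: minimal_valuation_def)
  moreover have "?\<mu> UNIV < top" by (simp add: vrestrict_def openin_johnstone_top_UNIV)
  ultimately have "(\<lambda>n. ?\<mu> (diag_fst_ge n)) \<longlonglongrightarrow> 0"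
    by (rule minimal_vals_johnstone_tail)
  moreover have "?\<mu> (diag_fst_ge n) = 1" for n
  proof -
    have "(n, \<infinity>) \<in> diag_fst_ge n" by (simp add: diag_fst_ge_def)
    then show ?thesis by (auto simp: vrestrict_def openin_diag_fst_ge)
  qed
  ultimately show False by (simp add: LIMSEQ_const_iff)
qed

theorem corollary3p14:
  shows "continuous_valuation johnstone_top (\<lambda>U. if U = {} then 0 else 1)
       \<and> point_continuous johnstone_top (\<lambda>U. if U = {} then 0 else 1)
       \<and> \<not> minimal_valuation johnstone_top (\<lambda>U. if U = {} then 0 else 1)"
  using continuous_valuation_nonempty_indicator[OF johnstone_open_Int_nonempty]
    point_continuous_nonempty_indicator not_minimal_valuation_johnstone_nonempty_indicator
  by blast

end
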